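(* Let $S$ be a semiring satisfying the standing assumptions below, and let $V$ and $W$ be finitely generated semimodules over $S$. If $T: V \to W$ is a surjective linear transformation, then $T$ is invertible (injective and surjective) if and only if $T$ preserves dimension, i.e. $\dim(T(U)) = \dim(U)$ for every subsemimodule $U$ of $V$.
   Context: A semiring $(S,+,\cdot)$ here means: $(S,+)$ is a commutative monoid with zero $0$, $(S,\cdot)$ is a commutative monoid with identity $1$, multiplication distributes over addition, and $0$ is absorbing. Standing assumptions on $S$: $S$ is additively idempotent ($a+a=a$), multiplicatively cancellative (for every nonzero $a$, $ba=ca$ implies $b=c$), and additively unit irreducible (if $a+b$ is a unit then $a$ or $b$ is a unit). A semimodule over $S$ is a nonempty subset of some $M_{m\times n}(S)$ closed under addition and scalar multiplication; a subsemimodule is a semimodule contained in another; finitely generated means equal to the set of $S$-linear combinations of a finite subset. A basis is a linearly independent spanning set (linearly independent: no element lies in the span of the others); the dimension $\dim$ of a finitely generated semimodule is the common cardinality of its bases. All semimodules considered in the paper are finitely generated. A linear transformation satisfies $T(\alpha x+\beta y)=\alpha T(x)+\beta T(y)$. *)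

theory Defs
  imports Main
begin

(* Elements of M_{m x n}(S) are represented as functions 'i \<Rightarrow> 'a on a finite
   index type 'i (e.g. 'i = rows \<times> columns); operations are entrywise. *)

definition vadd :: "('i \<Rightarrow> 'a::plus) \<Rightarrow> ('i \<Rightarrow> 'a) \<Rightarrow> ('i \<Rightarrow> 'a)" where
  "vadd x y = (\<lambda>i. x i + y i)"

definition smul :: "'a::times \<Rightarrow> ('i \<Rightarrow> 'a) \<Rightarrow> ('i \<Rightarrow> 'a)" where
  "smul c x = (\<lambda>i. c * x i)"

definition is_unit_sr :: "'a::{times,one} \<Rightarrow> bool" where
  "is_unit_sr a \<longleftrightarrow> (\<exists>b. a * b = 1)"

definition standing_semiring :: "'a::{comm_semiring_0, comm_monoid_mult} itself \<Rightarrow> bool" where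
  "standing_semiring _ \<longleftrightarrow>
     (\<forall>a::'a. a + a = a) \<and>
     (\<forall>a b c::'a. a \<noteq> 0 \<longrightarrow> b * a = c * a \<longrightarrow> b = c) \<and>
     (\<forall>a b::'a. is_unit_sr (a + b) \<longrightarrow> is_unit_sr a \<or> is_unit_sr b)"

definition semimodule :: "('i \<Rightarrow> 'a::{comm_semiring_0, comm_monoid_mult}) set \<Rightarrow> bool" where
  "semimodule V \<longleftrightarrow> V \<noteq> {} \<and> (\<forall>x\<in>V. \<forall>y\<in>V. vadd x y \<in> V) \<and> (\<forall>c. \<forall>x\<in>V. smul c x \<in> V)"

definition span_sr :: "('i \<Rightarrow> 'a::{comm_semiring_0, comm_monoid_mult}) set \<Rightarrow> ('i \<Rightarrow> 'a) set" where
  "span_sr A = {x. \<exists>B c. finite B \<and> B \<subseteq> A \<and> x = (\<lambda>i. \<Sum>b\<in>B. c b * b i)}"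

definition fin_gen :: "('i \<Rightarrow> 'a::{comm_semiring_0, comm_monoid_mult}) set \<Rightarrow> bool" where
  "fin_gen V \<longleftrightarrow> (\<exists>A. finite A \<and> A \<subseteq> V \<and> span_sr A = V)"

definition lin_indep_sr :: "('i \<Rightarrow> 'a::{comm_semiring_0, comm_monoid_mult}) set \<Rightarrow> bool" where
  "lin_indep_sr A \<longleftrightarrow> (\<forall>a\<in>A. a \<notin> span_sr (A - {a}))"

definition basis_sr :: "('i \<Rightarrow> 'a::{comm_semiring_0, comm_monoid_mult}) set \<Rightarrow> ('i \<Rightarrow> 'a) set \<Rightarrow> bool" where
  "basis_sr B V \<longleftrightarrow> B \<subseteq> V \<and> lin_indep_sr B \<and> span_sr B = V"

definition dim_sr :: "('i \<Rightarrow> 'a::{comm_semiring_0, comm_monoid_mult}) set \<Rightarrow> nat" where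
  "dim_sr V = (SOME n. \<exists>B. basis_sr B V \<and> finite B \<and> card B = n)"

definition linear_sr :: "('i \<Rightarrow> 'a::{comm_semiring_0, comm_monoid_mult}) set \<Rightarrow> ('j \<Rightarrow> 'a) set
     \<Rightarrow> (('i \<Rightarrow> 'a) \<Rightarrow> ('j \<Rightarrow> 'a)) \<Rightarrow> bool" where
  "linear_sr V W T \<longleftrightarrow> (\<forall>x\<in>V. T x \<in> W) \<and>
     (\<forall>\<alpha> \<beta>. \<forall>x\<in>V. \<forall>y\<in>V. T (vadd (smul \<alpha> x) (smul \<beta> y)) = vadd (smul \<alpha> (T x)) (smul \<beta> (T y)))"

end

theory Submission
  imports Defs
begin

(* An injective linear map carries the bases of a subsemimodule bijectively onto the
   bases of its image, so it preserves dimension.  Conversely, suppose T x = T y with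
   x \<noteq> y.  If T x = 0, a nonzero element of the kernel spans a semimodule of dimension 1
   that is mapped onto {0}.  Otherwise neither of x, y is a multiple of the other, since
   T (c x) = T x forces c = 1 by cancellation at a nonzero coordinate of T x; by unit
   irreducibility span {x, y} then has no one-element basis, while its image span {T x}
   has dimension 1. *)

lemma semimodule_zero:
  assumes "semimodule V"
  shows "(\<lambda>i. 0) \<in> V"
proof -
  obtain x where "x \<in> V" using assms unfolding semimodule_def by auto
  then have "smul 0 x \<in> V" using assms unfolding semimodule_def by auto
  then show ?thesis by (simp add: smul_def)
qed

lemma semimodule_sum:
  assumes "semimodule V" "finite F" "F \<subseteq> V"
  shows "(\<lambda>i. \<Sum>b\<in>F. c b * b i) \<in> V"
  using assms(2,3)
proof (induction F rule: finite_induct)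
  case empty
  then show ?case using semimodule_zero[OF assms(1)] by simp
next
  case (insert b F)
  then have "vadd (smul (c b) b) (\<lambda>i. \<Sum>b\<in>F. c b * b i) \<in> V"
    using assms(1) unfolding semimodule_def by auto
  then show ?case using insert by (simp add: vadd_def smul_def)
qed

lemma span_srI:
  assumes "finite F" "F \<subseteq> A" "x = (\<lambda>i. \<Sum>b\<in>F. c b * b i)"
  shows "x \<in> span_sr A"
  unfolding span_sr_def using assms by blast

lemma span_srE:
  assumes "x \<in> span_sr A"
  obtains F c where "finite F" "F \<subseteq> A" "x = (\<lambda>i. \<Sum>b\<in>F. c b * b i)"
  using assms unfolding span_sr_def by blast

lemma span_sr_subset:
  assumes "semimodule V" "B \<subseteq> V"
  shows "span_sr B \<subseteq> V"
  using semimodule_sum[OF assms(1)] assms(2) by (auto elim!: span_srE)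

lemma span_sr_mono: "A \<subseteq> B \<Longrightarrow> span_sr A \<subseteq> span_sr B"
  unfolding span_sr_def by blast

lemma span_sr_superset: "A \<subseteq> span_sr A"
  by (auto intro: span_srI[of "{a}" _ _ "\<lambda>_. 1" for a])

lemma span_sr_empty: "span_sr {} = {\<lambda>i. 0}"
  unfolding span_sr_def by auto

lemma zero_in_span_sr: "(\<lambda>i. 0) \<in> span_sr A"
  by (rule span_srI[of "{}"]) auto

lemma semimodule_span_sr: "semimodule (span_sr A)"
  unfolding semimodule_def
proof (intro conjI ballI allI)
  show "span_sr A \<noteq> {}" using zero_in_span_sr by blast
next
  fix x y assume "x \<in> span_sr A" "y \<in> span_sr A"
  then obtain F c G d where F: "finite F" "F \<subseteq> A" "x = (\<lambda>i. \<Sum>b\<in>F. c b * b i)"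
    and G: "finite G" "G \<subseteq> A" "y = (\<lambda>i. \<Sum>b\<in>G. d b * b i)"
    by (auto elim!: span_srE)
  define e where "e b = (if b \<in> F then c b else 0) + (if b \<in> G then d b else 0)" for b
  have "vadd x y = (\<lambda>i. \<Sum>b\<in>F \<union> G. e b * b i)"
  proof
    fix i
    have "(\<Sum>b\<in>F \<union> G. e b * b i) =
        (\<Sum>b\<in>F \<union> G. if b \<in> F then c b * b i else 0) + (\<Sum>b\<in>F \<union> G. if b \<in> G then d b * b i else 0)"
      unfolding e_def sum.distrib[symmetric] by (rule sum.cong) (auto simp: distrib_right)
    also have "\<dots> = (\<Sum>b\<in>F. c b * b i) + (\<Sum>b\<in>G. d b * b i)"
      using F(1) G(1) by (simp add: sum.inter_restrict[symmetric] Int_absorb1 Int_absorb2)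
    finally show "vadd x y i = (\<Sum>b\<in>F \<union> G. e b * b i)"
      using F(3) G(3) by (simp add: vadd_def)
  qed
  then show "vadd x y \<in> span_sr A" using F G by (intro span_srI) auto
next
  fix a x assume "x \<in> span_sr A"
  then obtain F c where F: "finite F" "F \<subseteq> A" "x = (\<lambda>i. \<Sum>b\<in>F. c b * b i)"
    by (auto elim!: span_srE)
  then have "smul a x = (\<lambda>i. \<Sum>b\<in>F. (a * c b) * b i)"
    by (simp add: smul_def sum_distrib_left mult.assoc)
  then show "smul a x \<in> span_sr A" using F by (intro span_srI) auto
qed

lemma fin_gen_span_sr: "finite A \<Longrightarrow> fin_gen (span_sr A)"
  unfolding fin_gen_def using span_sr_superset by blast

lemma span_sr_single: "span_sr {z} = range (\<lambda>c. smul c z)"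
proof
  show "span_sr {z} \<subseteq> range (\<lambda>c. smul c z)"
  proof
    fix x assume "x \<in> span_sr {z}"
    then obtain F c where F: "F \<subseteq> {z}" "x = (\<lambda>i. \<Sum>b\<in>F. c b * b i)"
      by (auto elim!: span_srE)
    from F(1) have "F = {} \<or> F = {z}" by blast
    then have "x = smul (if F = {} then 0 else c z) z"
      using F(2) by (auto simp: smul_def)
    then show "x \<in> range (\<lambda>c. smul c z)" by blast
  qed
next
  show "range (\<lambda>c. smul c z) \<subseteq> span_sr {z}"
    by (auto simp: smul_def intro!: span_srI[of "{z}"])
qed

lemma span_sr_single_subset: "w \<in> span_sr A \<Longrightarrow> span_sr {w} \<subseteq> span_sr A"
  using semimodule_span_sr[of A] unfolding span_sr_single semimodule_def by blast

lemma span_sr_zero: "span_sr {\<lambda>i. 0} = {\<lambda>i. 0}"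
  unfolding span_sr_single by (auto simp: smul_def)

lemma dim_sr_eqI:
  assumes "basis_sr B U" "finite B"
    and "\<And>B'. basis_sr B' U \<Longrightarrow> finite B' \<Longrightarrow> card B' = card B"
  shows "dim_sr U = card B"
  unfolding dim_sr_def
proof (rule some_equality)
  show "\<exists>B'. basis_sr B' U \<and> finite B' \<and> card B' = card B" using assms(1,2) by blast
next
  fix n assume "\<exists>B'. basis_sr B' U \<and> finite B' \<and> card B' = n"
  then show "n = card B" using assms(3) by blast
qed

lemma basis_sr_card_dim:
  assumes "basis_sr B U" "finite B"
  obtains B' where "basis_sr B' U" "finite B'" "card B' = dim_sr U"
  using someI_ex[of "\<lambda>n. \<exists>B. basis_sr B U \<and> finite B \<and> card B = n"] assms
  unfolding dim_sr_def by blast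

lemma dim_sr_zero: "dim_sr {\<lambda>i. 0} = 0"
proof -
  have "basis_sr {} {\<lambda>i. 0}"
    unfolding basis_sr_def lin_indep_sr_def span_sr_empty by simp
  moreover have "B = {}" if "basis_sr B {\<lambda>i. 0}" for B :: "('a \<Rightarrow> 'b) set"
    using that zero_in_span_sr unfolding basis_sr_def lin_indep_sr_def by blast
  ultimately show ?thesis using dim_sr_eqI[of "{}"] by fastforce
qed

lemma smul_cancel_right:
  assumes "standing_semiring TYPE('a::{comm_semiring_0, comm_monoid_mult})"
    and "x \<noteq> (\<lambda>i. 0)" "smul a x = smul (b::'a) x"
  shows "a = b"
proof -
  obtain i where "x i \<noteq> 0" using assms(2) by auto
  moreover have "a * x i = b * x i" using assms(3) by (simp add: smul_def fun_eq_iff)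
  ultimately show ?thesis using assms(1) unfolding standing_semiring_def by blast
qed

lemma unit_summand_if_unit_sum:
  assumes "standing_semiring TYPE('a::{comm_semiring_0, comm_monoid_mult})"
    and "(0::'a) \<noteq> 1" "finite F" "is_unit_sr (sum (f::'b \<Rightarrow> 'a) F)"
  shows "\<exists>b\<in>F. is_unit_sr (f b)"
  using assms(3,4)
proof (induction F rule: finite_induct)
  case empty
  then show ?case using assms(2) by (simp add: is_unit_sr_def)
next
  case (insert b F)
  then have "is_unit_sr (f b) \<or> is_unit_sr (sum f F)"
    using assms(1) unfolding standing_semiring_def by simp
  then show ?case using insert.IH by blast
qed

text \<open>With a = d a w for a \<in> A and w = \<Sum> c a a, cancelling w gives \<Sum> c a d a = 1;
  by unit irreducibility some c a d a is a unit, so w is a multiple of that a.\<close>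
lemma generator_in_spanning_set:
  assumes st: "standing_semiring TYPE('a::{comm_semiring_0, comm_monoid_mult})"
    and w: "w \<noteq> (\<lambda>i. 0::'a)" "w \<in> span_sr A" and A: "A \<subseteq> span_sr {w}"
  shows "\<exists>a\<in>A. w \<in> span_sr {a}"
proof -
  obtain F c where F: "finite F" "F \<subseteq> A" "w = (\<lambda>i. \<Sum>a\<in>F. c a * a i)"
    using w(2) by (auto elim!: span_srE)
  have "\<forall>a\<in>A. \<exists>k. a = smul k w" using A unfolding span_sr_single by blast
  then obtain d where d: "\<And>a. a \<in> A \<Longrightarrow> a = smul (d a) w" by metis
  have "smul 1 w = smul (\<Sum>a\<in>F. c a * d a) w"
  proof
    fix i
    have "a i = d a * w i" if "a \<in> F" for a
      using d[OF subsetD[OF F(2) that]] by (simp add: smul_def fun_eq_iff)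
    moreover have "w i = (\<Sum>a\<in>F. c a * a i)" using F(3) by simp
    ultimately have "w i = (\<Sum>a\<in>F. c a * (d a * w i))" by simp
    then show "smul 1 w i = smul (\<Sum>a\<in>F. c a * d a) w i"
      by (simp add: smul_def sum_distrib_right mult.assoc)
  qed
  then have "is_unit_sr (\<Sum>a\<in>F. c a * d a)"
    using smul_cancel_right[OF st w(1)] unfolding is_unit_sr_def by (metis mult_1_right)
  moreover have "(0::'a) \<noteq> 1"
  proof
    assume "(0::'a) = 1"
    then have "w i = 0" for i by (metis mult_1 mult_zero_left)
    then show False using w(1) by auto
  qed
  ultimately obtain a e where a: "a \<in> F" "c a * d a * e = 1"
    using unit_summand_if_unit_sum[OF st _ F(1)] unfolding is_unit_sr_def by blast
  have aA: "a \<in> A" using a(1) F(2) by blast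
  have "w = smul (c a * e) a"
  proof
    fix i
    have "a i = d a * w i" using d[OF aA] by (simp add: smul_def fun_eq_iff)
    then have "smul (c a * e) a i = (c a * d a * e) * w i" by (simp add: smul_def ac_simps)
    then show "w i = smul (c a * e) a i" using a(2) by simp
  qed
  then show ?thesis using aA unfolding span_sr_single by blast
qed

lemma dim_sr_span_single:
  assumes st: "standing_semiring TYPE('a::{comm_semiring_0, comm_monoid_mult})"
    and z: "z \<noteq> (\<lambda>i. 0::'a)"
  shows "dim_sr (span_sr {z}) = 1"
proof -
  have "basis_sr {z} (span_sr {z})"
    using z span_sr_superset unfolding basis_sr_def lin_indep_sr_def by (auto simp: span_sr_empty)
  moreover have "card B = 1" if B: "basis_sr B (span_sr {z})" for B
  proof -
    obtain b where b: "b \<in> B" "z \<in> span_sr {b}"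
      using generator_in_spanning_set[OF st z] B span_sr_superset unfolding basis_sr_def by blast
    have "b' = b" if "b' \<in> B" for b'
    proof (rule ccontr)
      assume "b' \<noteq> b"
      then have "span_sr {b} \<subseteq> span_sr (B - {b'})" using b(1) by (intro span_sr_mono) blast
      moreover have "b' \<in> span_sr {b}"
        using \<open>b' \<in> B\<close> B span_sr_single_subset[OF b(2)] unfolding basis_sr_def by blast
      ultimately show False using \<open>b' \<in> B\<close> B unfolding basis_sr_def lin_indep_sr_def by blast
    qed
    then have "B = {b}" using b(1) by blast
    then show ?thesis by simp
  qed
  ultimately show ?thesis using dim_sr_eqI[of "{z}"] by simp
qed

lemma multiple_if_span_sr_pair_eq_single:
  assumes st: "standing_semiring TYPE('a::{comm_semiring_0, comm_monoid_mult})"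
    and eq: "span_sr {x, y} = span_sr {w::'i \<Rightarrow> 'a}"
  shows "x \<in> span_sr {y} \<or> y \<in> span_sr {x}"
proof (cases "w = (\<lambda>i. 0)")
  case True
  then have "x = y" using eq span_sr_superset[of "{x, y}"] by (auto simp: span_sr_zero)
  then show ?thesis using span_sr_superset by blast
next
  case False
  have "{x, y} \<subseteq> span_sr {w}" using eq span_sr_superset by blast
  moreover have "w \<in> span_sr {x, y}" using eq span_sr_superset by blast
  ultimately obtain a where a: "a \<in> {x, y}" "w \<in> span_sr {a}"
    using generator_in_spanning_set[OF st False] by blast
  then have "{x, y} \<subseteq> span_sr {a}"
    using \<open>{x, y} \<subseteq> span_sr {w}\<close> span_sr_single_subset by blast
  then show ?thesis using a(1) by blast
qed

lemma dim_sr_span_pair_neq_1: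
  assumes st: "standing_semiring TYPE('a::{comm_semiring_0, comm_monoid_mult})"
    and "x \<notin> span_sr {y}" "y \<notin> span_sr {x::'i \<Rightarrow> 'a}"
  shows "dim_sr (span_sr {x, y}) \<noteq> 1"
proof
  assume dim: "dim_sr (span_sr {x, y}) = 1"
  have "x \<noteq> y" using assms(2) span_sr_superset by blast
  then have "basis_sr {x, y} (span_sr {x, y})"
    using assms(2,3) span_sr_superset[of "{x, y}"] unfolding basis_sr_def lin_indep_sr_def
    by (auto simp: insert_Diff_if)
  then obtain B where "basis_sr B (span_sr {x, y})" "card B = 1"
    using basis_sr_card_dim dim by (metis finite.emptyI finite.insertI)
  then obtain w where "span_sr {x, y} = span_sr {w}"
    unfolding basis_sr_def by (metis card_1_singletonE)
  then show False using multiple_if_span_sr_pair_eq_single[OF st] assms(2,3) by blast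
qed

locale linear_sr_on =
  fixes V :: "('i \<Rightarrow> 'a::{comm_semiring_0, comm_monoid_mult}) set"
    and W :: "('j \<Rightarrow> 'a) set"
    and T :: "('i \<Rightarrow> 'a) \<Rightarrow> ('j \<Rightarrow> 'a)"
  assumes semimodule_domain: "semimodule V"
    and linear: "linear_sr V W T"
begin

lemma linear_combination:
  "x \<in> V \<Longrightarrow> y \<in> V \<Longrightarrow> T (vadd (smul a x) (smul b y)) = vadd (smul a (T x)) (smul b (T y))"
  using linear unfolding linear_sr_def by blast

lemma linear_zero: "T (\<lambda>i. 0) = (\<lambda>i. 0)"
proof -
  obtain x where "x \<in> V" using semimodule_domain unfolding semimodule_def by auto
  from linear_combination[OF this this, of 0 0] show ?thesis by (simp add: vadd_def smul_def)
qed

lemma linear_add: "x \<in> V \<Longrightarrow> y \<in> V \<Longrightarrow> T (vadd x y) = vadd (T x) (T y)"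
  using linear_combination[of x y 1 1] by (simp add: smul_def)

lemma linear_smul: "x \<in> V \<Longrightarrow> T (smul a x) = smul a (T x)"
  using linear_combination[of x x a 0] by (simp add: vadd_def smul_def)

lemma linear_sum:
  assumes "finite F" "F \<subseteq> V"
  shows "T (\<lambda>i. \<Sum>b\<in>F. c b * b i) = (\<lambda>i. \<Sum>b\<in>F. c b * T b i)"
  using assms
proof (induction F rule: finite_induct)
  case empty
  then show ?case using linear_zero by simp
next
  case (insert b F)
  have split: "(\<lambda>i. \<Sum>b\<in>insert b F. c b * b i) = vadd (smul (c b) b) (\<lambda>i. \<Sum>b\<in>F. c b * b i)"
    using insert(1,2) by (simp add: vadd_def smul_def)
  have b: "b \<in> V" "smul (c b) b \<in> V"
    using insert(4) semimodule_domain unfolding semimodule_def by auto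
  have F: "F \<subseteq> V" "(\<lambda>i. \<Sum>b\<in>F. c b * b i) \<in> V"
    using semimodule_sum[OF semimodule_domain insert(1)] insert(4) by auto
  show ?case
    unfolding split linear_add[OF b(2) F(2)] linear_smul[OF b(1)] insert.IH[OF F(1)]
    using insert(1,2) by (simp add: vadd_def smul_def)
qed

lemma image_span_sr:
  assumes "B \<subseteq> V"
  shows "T ` span_sr B = span_sr (T ` B)"
proof
  show "T ` span_sr B \<subseteq> span_sr (T ` B)"
  proof
    fix y assume "y \<in> T ` span_sr B"
    then obtain F c where F: "finite F" "F \<subseteq> B" and y: "y = T (\<lambda>i. \<Sum>b\<in>F. c b * b i)"
      by (auto elim!: span_srE)
    have "y = (\<lambda>i. \<Sum>b\<in>F. c b * T b i)" using y linear_sum F assms by auto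
    also have "\<dots> = (\<lambda>i. \<Sum>b'\<in>T ` F. (\<Sum>b\<in>{b\<in>F. T b = b'}. c b) * b' i)"
    proof
      fix i
      have "(\<Sum>b\<in>F. c b * T b i) = (\<Sum>b'\<in>T ` F. \<Sum>b\<in>{b\<in>F. T b = b'}. c b * T b i)"
        using F(1) by (rule sum.image_gen)
      also have "\<dots> = (\<Sum>b'\<in>T ` F. (\<Sum>b\<in>{b\<in>F. T b = b'}. c b) * b' i)"
        by (auto simp: sum_distrib_right intro!: sum.cong)
      finally show "(\<Sum>b\<in>F. c b * T b i) = (\<Sum>b'\<in>T ` F. (\<Sum>b\<in>{b\<in>F. T b = b'}. c b) * b' i)" .
    qed
    finally show "y \<in> span_sr (T ` B)" using F by (intro span_srI) auto
  qed
next
  show "span_sr (T ` B) \<subseteq> T ` span_sr B"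
  proof
    fix y assume "y \<in> span_sr (T ` B)"
    then obtain F' c where F': "finite F'" "F' \<subseteq> T ` B" "y = (\<lambda>i. \<Sum>b'\<in>F'. c b' * b' i)"
      by (auto elim!: span_srE)
    then obtain F where F: "F \<subseteq> B" "inj_on T F" "F' = T ` F"
      by (auto simp: subset_image_inj)
    have "finite F" using F'(1) F(2,3) finite_image_iff by blast
    have "y = (\<lambda>i. \<Sum>b\<in>F. c (T b) * T b i)" using F'(3) F(2,3) by (simp add: sum.reindex)
    also have "\<dots> = T (\<lambda>i. \<Sum>b\<in>F. c (T b) * b i)"
      using linear_sum \<open>finite F\<close> F(1) assms by auto
    finally show "y \<in> T ` span_sr B"
      by (rule image_eqI[OF _ span_srI[OF \<open>finite F\<close> F(1) refl]])
  qed
qed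

lemma lin_indep_sr_image_iff:
  assumes inj: "inj_on T V" and B: "B \<subseteq> V"
  shows "lin_indep_sr (T ` B) \<longleftrightarrow> lin_indep_sr B"
proof -
  have "T a \<in> span_sr (T ` B - {T a}) \<longleftrightarrow> a \<in> span_sr (B - {a})" if a: "a \<in> B" for a
  proof -
    have "T ` B - {T a} = T ` (B - {a})" using inj B a by (auto simp: inj_on_def)
    moreover have "B - {a} \<subseteq> V" using B by blast
    ultimately have "T ` span_sr (B - {a}) = span_sr (T ` B - {T a})"
      by (simp add: image_span_sr)
    moreover have "span_sr (B - {a}) \<subseteq> V" using span_sr_subset[OF semimodule_domain] B by blast
    ultimately show ?thesis using inj_on_image_mem_iff[OF inj] a B by (metis subsetD)
  qed
  then show ?thesis unfolding lin_indep_sr_def by auto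
qed

lemma basis_sr_image_iff:
  assumes inj: "inj_on T V" and "U \<subseteq> V" "B \<subseteq> U"
  shows "basis_sr (T ` B) (T ` U) \<longleftrightarrow> basis_sr B U"
proof -
  have B: "B \<subseteq> V" using assms by blast
  have "span_sr (T ` B) = T ` U \<longleftrightarrow> span_sr B = U"
    unfolding image_span_sr[OF B, symmetric]
    using inj_on_image_eq_iff[OF inj span_sr_subset[OF semimodule_domain B] \<open>U \<subseteq> V\<close>] .
  then show ?thesis unfolding basis_sr_def using lin_indep_sr_image_iff[OF inj B] assms(3) by auto
qed

lemma dim_sr_image:
  assumes inj: "inj_on T V" and U: "U \<subseteq> V"
  shows "dim_sr (T ` U) = dim_sr U"
proof -
  have inj_B: "inj_on T B" if "B \<subseteq> U" for B using inj_on_subset[OF inj] that U by blast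
  have "(\<exists>B'. basis_sr B' (T ` U) \<and> finite B' \<and> card B' = n) \<longleftrightarrow>
        (\<exists>B. basis_sr B U \<and> finite B \<and> card B = n)" for n
  proof
    assume "\<exists>B'. basis_sr B' (T ` U) \<and> finite B' \<and> card B' = n"
    then obtain B' where B': "basis_sr B' (T ` U)" "finite B'" "card B' = n" by blast
    then obtain B where B: "B \<subseteq> U" "B' = T ` B"
      unfolding basis_sr_def by (meson subset_image_iff)
    then show "\<exists>B. basis_sr B U \<and> finite B \<and> card B = n"
      using B' basis_sr_image_iff[OF inj U B(1)] inj_B[OF B(1)] finite_image_iff card_image
      by metis
  next
    assume "\<exists>B. basis_sr B U \<and> finite B \<and> card B = n"
    then obtain B where B: "basis_sr B U" "finite B" "card B = n" by blast
    then have "B \<subseteq> U" unfolding basis_sr_def by blast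
    then show "\<exists>B'. basis_sr B' (T ` U) \<and> finite B' \<and> card B' = n"
      using B basis_sr_image_iff[OF inj U] card_image[OF inj_B] by blast
  qed
  then show ?thesis unfolding dim_sr_def by simp
qed

lemma eq_if_multiple_with_same_image:
  assumes st: "standing_semiring TYPE('a)"
    and "x \<in> V" "T x \<noteq> (\<lambda>i. 0)" "y \<in> span_sr {x}" "T y = T x"
  shows "y = x"
proof -
  obtain c where y: "y = smul c x" using assms(4) unfolding span_sr_single by blast
  have "smul c (T x) = smul 1 (T x)"
    using assms(2,5) linear_smul y by (simp add: smul_def)
  then have "c = 1" using smul_cancel_right[OF st assms(3)] by blast
  then show ?thesis using y by (simp add: smul_def)
qed

lemma zero_if_image_zero_and_dim_preserved:
  assumes st: "standing_semiring TYPE('a)"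
    and "z \<in> V" "T z = (\<lambda>i. 0)" "dim_sr (T ` span_sr {z}) = dim_sr (span_sr {z})"
  shows "z = (\<lambda>i. 0)"
proof (rule ccontr)
  assume z: "z \<noteq> (\<lambda>i. 0)"
  have "T ` span_sr {z} = {\<lambda>i. 0}"
    using assms(2,3) image_span_sr[of "{z}"] by (simp add: span_sr_zero)
  then show False using assms(4) dim_sr_span_single[OF st z] by (simp add: dim_sr_zero)
qed

lemma eq_if_image_eq_and_dim_preserved:
  assumes st: "standing_semiring TYPE('a)"
    and "x \<in> V" "y \<in> V" "T x = T y" "T x \<noteq> (\<lambda>i. 0)"
    and "dim_sr (T ` span_sr {x, y}) = dim_sr (span_sr {x, y})"
  shows "x = y"
proof (rule ccontr)
  assume "x \<noteq> y"
  then have "x \<notin> span_sr {y}" "y \<notin> span_sr {x}"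
    using eq_if_multiple_with_same_image[OF st] assms(2-5) by metis+
  then have "dim_sr (span_sr {x, y}) \<noteq> 1" by (rule dim_sr_span_pair_neq_1[OF st])
  moreover have "T ` span_sr {x, y} = span_sr {T x}"
    using assms(2-4) image_span_sr[of "{x, y}"] by simp
  ultimately show False using assms(6) dim_sr_span_single[OF st assms(5)] by simp
qed

lemma inj_on_if_dim_preserved:
  assumes st: "standing_semiring TYPE('a)"
    and preserved: "\<And>U. semimodule U \<Longrightarrow> fin_gen U \<Longrightarrow> U \<subseteq> V \<Longrightarrow> dim_sr (T ` U) = dim_sr U"
  shows "inj_on T V"
proof (rule inj_onI)
  fix x y assume xy: "x \<in> V" "y \<in> V" "T x = T y"
  have span_preserved: "dim_sr (T ` span_sr A) = dim_sr (span_sr A)" if "finite A" "A \<subseteq> V" for A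
    using preserved semimodule_span_sr fin_gen_span_sr[OF that(1)]
      span_sr_subset[OF semimodule_domain that(2)] by blast
  show "x = y"
  proof (cases "T x = (\<lambda>i. 0)")
    case True
    have "z = (\<lambda>i. 0)" if "z \<in> V" "T z = (\<lambda>i. 0)" for z
      using zero_if_image_zero_and_dim_preserved[OF st that] span_preserved[of "{z}"] that(1)
      by simp
    then show ?thesis using True xy by metis
  next
    case False
    then show ?thesis
      using eq_if_image_eq_and_dim_preserved[OF st xy False] span_preserved[of "{x, y}"] xy(1,2)
      by simp
  qed
qed

end

theorem lemma2p8:
  fixes V :: "('i::finite \<Rightarrow> 'a::{comm_semiring_0, comm_monoid_mult}) set"
    and W :: "('j::finite \<Rightarrow> 'a) set"
    and T :: "('i \<Rightarrow> 'a) \<Rightarrow> ('j \<Rightarrow> 'a)"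
  assumes "standing_semiring TYPE('a)"
    and "semimodule V" and "fin_gen V"
    and "semimodule W" and "fin_gen W"
    and "linear_sr V W T"
    and "T ` V = W"
  shows "(inj_on T V \<and> T ` V = W) \<longleftrightarrow>
         (\<forall>U. semimodule U \<and> fin_gen U \<and> U \<subseteq> V \<longrightarrow> dim_sr (T ` U) = dim_sr U)"
proof -
  interpret linear_sr_on V W T
    using assms(2,6) by unfold_locales
  show ?thesis
    using dim_sr_image inj_on_if_dim_preserved[OF assms(1)] assms(7) by blast
qed

end
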